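(* Let $m \geq 1$ be an integer. Let $J$ be a $7\times 7$ Jacobi matrix that realizes perfect state transfer and whose spectrum is $\{0, \pm(2m+1), \pm(2m+2), \pm(2m+3)\}$. Then $J$ exhibits early state exclusion exactly $2m$ times, i.e., if $T>0$ is the earliest time at which $J$ realizes perfect state transfer, there are exactly $2m$ distinct times $\tau\in(0,T)$ with $\langle e^{-iJ\tau}\mathbf{e}_0,\mathbf{e}_0\rangle=0$.
   Context: A Jacobi matrix of order $N+1$ is a real symmetric tridiagonal matrix $J$ with diagonal entries $a_1,\dots,a_{N+1}\in\mathbb{R}$ and off-diagonal entries $b_1,\dots,b_N>0$ (so $J_{i,i}=a_i$, $J_{i,i+1}=J_{i+1,i}=b_i$, all other entries zero). Let $\{\mathbf{e}_k\}_{k=0}^{N}$ be the canonical basis of $\mathbb{C}^{N+1}$, with $\mathbf{e}_0=[1,0,\dots,0]^\top$ and $\mathbf{e}_N=[0,\dots,0,1]^\top$, and let $\langle\cdot,\cdot\rangle$ be the standard inner product on $\mathbb{C}^{N+1}$. $J$ realizes perfect state transfer (PST) at time $T>0$ if $e^{-iJT}\mathbf{e}_0 = e^{i\phi}\mathbf{e}_N$ for some $\phi\in\mathbb{R}$; "$J$ realizes PST" means this holds for some $T>0$. If $J$ realizes PST and $T>0$ is the earliest time at which it does, then $J$ exhibits early state exclusion (ESE) at time $\tau$ if $\tau\in(0,T)$ and $\langle e^{-iJ\tau}\mathbf{e}_0,\mathbf{e}_0\rangle = 0$. Here $N+1=7$. *)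

theory Defs
  imports "Jordan_Normal_Form.Spectral_Radius"
begin

definition jacobi_matrix :: "nat \<Rightarrow> real mat \<Rightarrow> bool" where
  "jacobi_matrix n J \<longleftrightarrow> J \<in> carrier_mat n n \<and>
     (\<forall>i j. i < n \<longrightarrow> j < n \<longrightarrow> J $$ (i,j) = J $$ (j,i)) \<and>
     (\<forall>i. i + 1 < n \<longrightarrow> J $$ (i, i+1) > 0) \<and>
     (\<forall>i j. i < n \<longrightarrow> j < n \<longrightarrow> i + 1 < j \<longrightarrow> J $$ (i,j) = 0)"

text \<open>The i-th entry of the vector exp(-i J t) e_0, with the matrix exponential
  given by its (entrywise convergent) power series.\<close>
definition evol :: "real mat \<Rightarrow> real \<Rightarrow> nat \<Rightarrow> complex" where
  "evol J t i = (\<Sum>k. ((- \<i> * complex_of_real t) ^ k / of_nat (fact k)) *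
                      ((map_mat complex_of_real J) ^\<^sub>m k) $$ (i, 0))"

definition pst_at :: "nat \<Rightarrow> real mat \<Rightarrow> real \<Rightarrow> bool" where
  "pst_at n J T \<longleftrightarrow> T > 0 \<and> (\<exists>\<phi>::real. \<forall>i<n.
      evol J T i = exp (\<i> * complex_of_real \<phi>) * (if i = n - 1 then 1 else 0))"

definition realizes_pst :: "nat \<Rightarrow> real mat \<Rightarrow> bool" where
  "realizes_pst n J \<longleftrightarrow> (\<exists>T. pst_at n J T)"

definition earliest_pst_time :: "nat \<Rightarrow> real mat \<Rightarrow> real \<Rightarrow> bool" where
  "earliest_pst_time n J T \<longleftrightarrow> pst_at n J T \<and> (\<forall>t. 0 < t \<and> t < T \<longrightarrow> \<not> pst_at n J t)"

text \<open>Inner product of exp(-iJ tau) e_0 with e_0 is its 0-th entry.\<close>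
definition ese_times :: "nat \<Rightarrow> real mat \<Rightarrow> real \<Rightarrow> real set" where
  "ese_times n J T = {\<tau>. 0 < \<tau> \<and> \<tau> < T \<and> evol J \<tau> 0 = 0}"

end

theory Submission
  imports Defs "HOL-Computational_Algebra.Polynomial"
begin

(* Write b = 2m+2, so the spectrum is {0, +-(b-1), +-b, +-(b+1)}, and let v_j be eigenvectors.
   Since J is tridiagonal, (J^k)(6,0) = 0 for k < 6; in the spectral decomposition this says that
   the corner weights y_j = v_j(6) v_j(0) / |v_j|^2 have six vanishing moments, which forces
   y_j = y_0 * prod_{i<>0} (l_0 - l_i) / prod_{i<>j} (l_j - l_i).  Perfect state transfer gives
   |v_j(0)| = |v_j(6)|, so the weights |v_j(0)|^2 / |v_j|^2 of the return amplitude
   <exp(-iJt) e_0, e_0> are |y_j|, and v_j(6) = +-(-1)^(l_j) v_j(0).  Hence PST happens at time pi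
   and not earlier, and the return amplitude is a positive multiple of an explicit cosine sum F(t)
   with frequencies 0, b-1, b, b+1.  Writing F(t) = P(cos t) with Chebyshev polynomials, P has
   degree b+1 and a triple root at -1, so F has at most b-2 = 2m zeros in (0, pi); the signs of F
   at the points j pi / b, j = 0..2m, alternate, which gives at least 2m zeros. *)

section \<open>Spectral calculus of real symmetric matrices\<close>

lemma exp_series_of_nat_fact: "(\<lambda>k. z ^ k / of_nat (fact k)) sums exp (z :: complex)"
proof -
  have "(\<lambda>k. z ^ k /\<^sub>R fact k) = (\<lambda>k. z ^ k / of_nat (fact k))"
    by (simp add: scaleR_conv_of_real divide_inverse mult.commute)
  thus ?thesis using exp_converges[of z] by simp
qed

locale symmetric_eigenbasis =
  fixes n :: nat and J :: "real mat" and lam :: "nat \<Rightarrow> real" and v :: "nat \<Rightarrow> real vec"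
  assumes carrier: "J \<in> carrier_mat n n"
    and symmetric: "\<And>i j. i < n \<Longrightarrow> j < n \<Longrightarrow> J $$ (i,j) = J $$ (j,i)"
    and eigenvector: "\<And>j. j < n \<Longrightarrow> eigenvector J (v j) (lam j)"
    and eigenvalues_distinct: "\<And>j k. j < n \<Longrightarrow> k < n \<Longrightarrow> j \<noteq> k \<Longrightarrow> lam j \<noteq> lam k"
begin

lemma eigenvector_carrier: "j < n \<Longrightarrow> v j \<in> carrier_vec n"
  using eigenvector carrier unfolding eigenvector_def by auto

lemma scalar_prod_eigenvectors: "k < n \<Longrightarrow> v j \<bullet> v k = (\<Sum>i<n. v j $ i * v k $ i)"
  using eigenvector_carrier[of k] by (simp add: scalar_prod_def atLeast0LessThan carrier_vecD)

lemma eigen_equation: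
  assumes "j < n" "i < n"
  shows "(\<Sum>l<n. J $$ (i,l) * v j $ l) = lam j * v j $ i"
proof -
  have "(J *\<^sub>v v j) $ i = (lam j \<cdot>\<^sub>v v j) $ i"
    using eigenvector[OF assms(1)] unfolding eigenvector_def by simp
  thus ?thesis using assms carrier eigenvector_carrier[OF assms(1)]
    by (simp add: scalar_prod_def atLeast0LessThan)
qed

lemma eigenvector_sqnorm_pos: "j < n \<Longrightarrow> v j \<bullet> v j > 0"
  using eigenvector[of j] eigenvector_carrier[of j] carrier
  by (auto simp: eigenvector_def simp flip: conjugate_square_greater_0_vec)

lemma eigenvectors_orthogonal:
  assumes "j < n" "k < n" "j \<noteq> k"
  shows "v j \<bullet> v k = 0"
proof -
  have "transpose_mat J = J"
    using carrier symmetric by (intro eq_matI) auto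
  hence "(J *\<^sub>v v j) \<bullet> v k = v j \<bullet> (J *\<^sub>v v k)"
    using transpose_vec_mult_scalar[OF carrier, of "v k" "v j"] eigenvector_carrier assms by simp
  hence "lam j * (v j \<bullet> v k) = lam k * (v j \<bullet> v k)"
    using eigenvector[OF assms(1)] eigenvector[OF assms(2)]
      eigenvector_carrier[OF assms(1)] eigenvector_carrier[OF assms(2)]
    unfolding eigenvector_def by simp
  thus ?thesis using eigenvalues_distinct[OF assms] by simp
qed

lemma eigenbasis_complete:
  assumes "i < n" "l < n"
  shows "(\<Sum>j<n. v j $ i * v j $ l / (v j \<bullet> v j)) = (if i = l then 1 else 0)"
proof -
  define V where "V = mat n n (\<lambda>(i,j). v j $ i)"
  define N where "N j = v j \<bullet> v j" for j
  define W where "W = mat n n (\<lambda>(j,l). v j $ l / N j)"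
  have V: "V \<in> carrier_mat n n" and W: "W \<in> carrier_mat n n"
    unfolding V_def W_def by auto
  have "W * V = 1\<^sub>m n"
  proof (rule eq_matI)
    fix j k assume "j < dim_row (1\<^sub>m n :: real mat)" "k < dim_col (1\<^sub>m n :: real mat)"
    hence jk: "j < n" "k < n" by auto
    have "(W * V) $$ (j,k) = (\<Sum>l<n. v j $ l * v k $ l) / N j"
      using jk by (simp add: V_def W_def scalar_prod_def atLeast0LessThan sum_divide_distrib)
    also have "\<dots> = (v j \<bullet> v k) / (v j \<bullet> v j)"
      using jk by (simp add: N_def scalar_prod_eigenvectors)
    finally show "(W * V) $$ (j,k) = 1\<^sub>m n $$ (j,k)"
      using jk eigenvectors_orthogonal eigenvector_sqnorm_pos[of j] by auto
  qed (auto simp: V_def W_def)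
  hence "V * W = 1\<^sub>m n" using mat_mult_left_right_inverse[OF W V] by simp
  hence "(V * W) $$ (i,l) = (if i = l then 1 else 0)" using assms by simp
  thus ?thesis using assms by (simp add: V_def W_def N_def scalar_prod_def atLeast0LessThan)
qed

lemma power_entry_spectral:
  assumes "i < n" "l < n"
  shows "(J ^\<^sub>m k) $$ (i,l) = (\<Sum>j<n. v j $ i * v j $ l / (v j \<bullet> v j) * lam j ^ k)"
  using assms
proof (induction k arbitrary: l)
  case 0
  then show ?case using carrier eigenbasis_complete[OF assms(1) 0(2)] by simp
next
  case (Suc k)
  have "(J ^\<^sub>m Suc k) $$ (i,l) = (\<Sum>p<n. (J ^\<^sub>m k) $$ (i,p) * J $$ (l,p))"
    using Suc.prems carrier symmetric by (simp add: scalar_prod_def atLeast0LessThan)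
  also have "\<dots> = (\<Sum>p<n. \<Sum>j<n. v j $ i / (v j \<bullet> v j) * lam j ^ k * (J $$ (l,p) * v j $ p))"
    using Suc.prems by (intro sum.cong refl) (simp add: Suc.IH sum_distrib_left sum_distrib_right mult_ac)
  also have "\<dots> = (\<Sum>j<n. v j $ i / (v j \<bullet> v j) * lam j ^ k * (\<Sum>p<n. J $$ (l,p) * v j $ p))"
    by (subst sum.swap) (simp add: sum_distrib_left)
  also have "\<dots> = (\<Sum>j<n. v j $ i * v j $ l / (v j \<bullet> v j) * lam j ^ Suc k)"
    using Suc.prems by (intro sum.cong refl) (simp add: eigen_equation)
  finally show ?case .
qed

lemma evol_spectral:
  assumes "i < n"
  shows "evol J t i = (\<Sum>j<n. complex_of_real (v j $ i * v j $ 0 / (v j \<bullet> v j)) *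
                                 exp (- \<i> * complex_of_real (lam j * t)))"
proof -
  have term_eq: "(- \<i> * complex_of_real t) ^ k / of_nat (fact k) *
      (map_mat complex_of_real J ^\<^sub>m k) $$ (i, 0) =
      (\<Sum>j<n. complex_of_real (v j $ i * v j $ 0 / (v j \<bullet> v j)) *
         ((- \<i> * complex_of_real (lam j * t)) ^ k / of_nat (fact k)))" for k
  proof -
    have "map_mat complex_of_real J ^\<^sub>m k = map_mat complex_of_real (J ^\<^sub>m k)"
      by (rule of_real_hom.mat_hom_pow[OF carrier, symmetric])
    hence "(map_mat complex_of_real J ^\<^sub>m k) $$ (i, 0) =
        (\<Sum>j<n. complex_of_real (v j $ i * v j $ 0 / (v j \<bullet> v j)) * complex_of_real (lam j) ^ k)"
      using assms carrier by (simp add: power_entry_spectral)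
    moreover have "(- \<i> * complex_of_real (lam j * t)) ^ k =
        (- \<i> * complex_of_real t) ^ k * complex_of_real (lam j) ^ k" for j
      by (simp flip: power_mult_distrib add: mult_ac)
    ultimately show ?thesis
      by (simp add: sum_distrib_left sum_divide_distrib mult_ac)
  qed
  have "(\<lambda>k. \<Sum>j<n. complex_of_real (v j $ i * v j $ 0 / (v j \<bullet> v j)) *
         ((- \<i> * complex_of_real (lam j * t)) ^ k / of_nat (fact k)))
      sums (\<Sum>j<n. complex_of_real (v j $ i * v j $ 0 / (v j \<bullet> v j)) *
         exp (- \<i> * complex_of_real (lam j * t)))"
    by (intro sums_sum sums_mult exp_series_of_nat_fact)
  thus ?thesis unfolding evol_def term_eq by (rule sums_unique[symmetric])
qed

lemma eigenvector_inner_evol: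
  assumes "l < n"
  shows "(\<Sum>i<n. complex_of_real (v l $ i) * evol J t i) =
         complex_of_real (v l $ 0) * exp (- \<i> * complex_of_real (lam l * t))"
proof -
  define c where "c j = complex_of_real (v j $ 0 / (v j \<bullet> v j)) * exp (- \<i> * complex_of_real (lam j * t))" for j
  have "(\<Sum>i<n. complex_of_real (v l $ i) * evol J t i) =
      (\<Sum>i<n. \<Sum>j<n. complex_of_real (v l $ i * v j $ i) * c j)"
    by (intro sum.cong refl) (simp add: evol_spectral c_def sum_distrib_left mult_ac)
  also have "\<dots> = (\<Sum>j<n. complex_of_real (v l \<bullet> v j) * c j)"
    by (subst sum.swap) (simp add: scalar_prod_eigenvectors sum_distrib_right)
  also have "\<dots> = complex_of_real (v l \<bullet> v l) * c l"
    using assms eigenvectors_orthogonal by (subst sum.remove[of _ l]) auto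
  finally show ?thesis
    using eigenvector_sqnorm_pos[OF assms] by (simp add: c_def)
qed

lemma evol_eq_if_phases:
  assumes phases: "\<And>j. j < n \<Longrightarrow> complex_of_real (v j $ 0) * exp (- \<i> * complex_of_real (lam j * t))
                                = c * complex_of_real (v j $ p)"
    and "i < n" "p < n"
  shows "evol J t i = c * (if i = p then 1 else 0)"
proof -
  have "evol J t i = (\<Sum>j<n. complex_of_real (v j $ i / (v j \<bullet> v j)) *
      (complex_of_real (v j $ 0) * exp (- \<i> * complex_of_real (lam j * t))))"
    using assms(2) by (simp add: evol_spectral mult_ac)
  also have "\<dots> = (\<Sum>j<n. c * complex_of_real (v j $ i * v j $ p / (v j \<bullet> v j)))"
    by (intro sum.cong refl, subst phases) (simp_all add: mult_ac)
  also have "\<dots> = c * complex_of_real (\<Sum>j<n. v j $ i * v j $ p / (v j \<bullet> v j))"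
    by (simp add: sum_distrib_left)
  finally show ?thesis using eigenbasis_complete[OF assms(2,3)] by simp
qed

lemma pst_at_iff_phases:
  assumes "0 < n"
  shows "pst_at n J T \<longleftrightarrow> T > 0 \<and> (\<exists>\<phi>. \<forall>j<n.
           complex_of_real (v j $ 0) * exp (- \<i> * complex_of_real (lam j * T)) =
           exp (\<i> * complex_of_real \<phi>) * complex_of_real (v j $ (n - 1)))"
  (is "_ \<longleftrightarrow> _ \<and> ?phases")
proof
  assume "pst_at n J T"
  then obtain \<phi> where "T > 0" and
    \<phi>: "\<And>i. i < n \<Longrightarrow> evol J T i = exp (\<i> * complex_of_real \<phi>) * (if i = n - 1 then 1 else 0)"
    unfolding pst_at_def by auto
  have "complex_of_real (v j $ 0) * exp (- \<i> * complex_of_real (lam j * T)) =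
        exp (\<i> * complex_of_real \<phi>) * complex_of_real (v j $ (n - 1))" if "j < n" for j
  proof -
    have "(\<Sum>i<n. complex_of_real (v j $ i) * evol J T i) =
        complex_of_real (v j $ (n - 1)) * exp (\<i> * complex_of_real \<phi>)"
      using assms by (simp add: \<phi> if_distrib sum.delta' cong: if_cong)
    thus ?thesis using eigenvector_inner_evol[OF that] by (simp add: mult.commute)
  qed
  with \<open>T > 0\<close> show "T > 0 \<and> ?phases" by blast
next
  assume "T > 0 \<and> ?phases"
  then obtain \<phi> where "T > 0" and phases: "\<And>j. j < n \<Longrightarrow>
      complex_of_real (v j $ 0) * exp (- \<i> * complex_of_real (lam j * T)) =
      exp (\<i> * complex_of_real \<phi>) * complex_of_real (v j $ (n - 1))"
    by blast
  have "evol J T i = exp (\<i> * complex_of_real \<phi>) * (if i = n - 1 then 1 else 0)" if "i < n" for i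
    using evol_eq_if_phases[OF phases that] assms by simp
  with \<open>T > 0\<close> show "pst_at n J T" unfolding pst_at_def by blast
qed

end

section \<open>Corner weights of Jacobi matrices\<close>

lemma jacobi_power_entry_eq_0:
  assumes jacobi: "jacobi_matrix n J" and "i < n" "l < n" "l + k < i"
  shows "(J ^\<^sub>m k) $$ (i,l) = 0"
  using assms(2-4)
proof (induction k arbitrary: l)
  case 0
  then show ?case using jacobi unfolding jacobi_matrix_def by auto
next
  case (Suc k)
  have "J \<in> carrier_mat n n" using jacobi unfolding jacobi_matrix_def by auto
  hence "(J ^\<^sub>m Suc k) $$ (i,l) = (\<Sum>p<n. (J ^\<^sub>m k) $$ (i,p) * J $$ (p,l))"
    using Suc.prems by (simp add: scalar_prod_def atLeast0LessThan)
  also have "\<dots> = 0"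
  proof (rule sum.neutral, intro ballI)
    fix p assume p: "p \<in> {..<n}"
    show "(J ^\<^sub>m k) $$ (i,p) * J $$ (p,l) = 0"
    proof (cases "p + k < i")
      case True
      then show ?thesis using Suc p by simp
    next
      case False
      hence "l + 1 < p" using Suc.prems by simp
      hence "J $$ (p,l) = 0" using jacobi p Suc.prems unfolding jacobi_matrix_def by auto
      thus ?thesis by simp
    qed
  qed
  finally show ?case .
qed

lemma vanishing_moments_prod_eq:
  fixes x y :: "nat \<Rightarrow> 'a :: field"
  assumes moments: "\<And>k. k + 1 < n \<Longrightarrow> (\<Sum>i<n. y i * x i ^ k) = 0" and "j < n"
  shows "y j * (\<Prod>i\<in>{..<n} - {j}. x j - x i) = y 0 * (\<Prod>i\<in>{..<n} - {0}. x 0 - x i)"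
proof (cases "j = 0")
  case False
  \<comment> \<open>test the moments against the polynomial vanishing at all nodes except x 0 and x j\<close>
  define A where "A = {..<n} - {0, j}"
  define p where "p = (\<Prod>a\<in>A. [:- x a, 1:])"
  have poly_p: "poly p z = (\<Prod>a\<in>A. z - x a)" for z
    by (simp add: p_def poly_prod)
  have "degree p \<le> card A"
    using degree_prod_sum_le[of A "\<lambda>a. [:- x a, 1:]"] by (simp add: p_def A_def)
  hence deg: "degree p + 1 < n"
    using \<open>j < n\<close> False by (simp add: A_def card_Diff_subset)
  have "(\<Sum>i<n. y i * poly p (x i)) = (\<Sum>i<n. \<Sum>k\<le>degree p. coeff p k * (y i * x i ^ k))"
    by (simp add: poly_altdef sum_distrib_left mult_ac)
  also have "\<dots> = (\<Sum>k\<le>degree p. coeff p k * (\<Sum>i<n. y i * x i ^ k))"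
    by (subst sum.swap) (simp add: sum_distrib_left)
  also have "\<dots> = 0" using deg by (intro sum.neutral ballI) (simp add: moments)
  finally have "(\<Sum>i<n. y i * poly p (x i)) = 0" .
  moreover have "(\<Sum>i<n. y i * poly p (x i)) = (\<Sum>i\<in>{0, j}. y i * poly p (x i))"
  proof (rule sum.mono_neutral_right)
    show "\<forall>i\<in>{..<n} - {0, j}. y i * poly p (x i) = 0"
      unfolding poly_p by (auto simp: A_def intro!: prod_zero)
  qed (use \<open>j < n\<close> in auto)
  ultimately have balance: "y j * poly p (x j) = - (y 0 * poly p (x 0))"
    using False by (simp add: add_eq_0_iff)
  have "{..<n} - {j} = insert 0 A" "{..<n} - {0} = insert j A" "finite A" "0 \<notin> A" "j \<notin> A"
    using \<open>j < n\<close> False by (auto simp: A_def)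
  hence "(\<Prod>i\<in>{..<n} - {j}. x j - x i) = (x j - x 0) * poly p (x j)"
    and "(\<Prod>i\<in>{..<n} - {0}. x 0 - x i) = (x 0 - x j) * poly p (x 0)"
    by (simp_all add: poly_p)
  moreover have "y j * ((x j - x 0) * poly p (x j)) = (x j - x 0) * (y j * poly p (x j))"
    by (simp only: mult_ac)
  moreover have "\<dots> = y 0 * ((x 0 - x j) * poly p (x 0))"
    by (simp add: balance algebra_simps)
  ultimately show ?thesis by simp
qed simp

context symmetric_eigenbasis
begin

definition corner_weight :: "nat \<Rightarrow> real" where
  "corner_weight j = v j $ (n - 1) * v j $ 0 / (v j \<bullet> v j)"

lemma corner_weight_prod_eq:
  assumes "jacobi_matrix n J" "j < n"
  shows "corner_weight j * (\<Prod>i\<in>{..<n} - {j}. lam j - lam i) =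
         corner_weight 0 * (\<Prod>i\<in>{..<n} - {0}. lam 0 - lam i)"
proof (rule vanishing_moments_prod_eq[OF _ assms(2)])
  fix k assume "k + 1 < n"
  hence "(\<Sum>i<n. corner_weight i * lam i ^ k) = (J ^\<^sub>m k) $$ (n - 1, 0)"
    by (simp add: power_entry_spectral corner_weight_def)
  also have "\<dots> = 0" using jacobi_power_entry_eq_0[OF assms(1)] \<open>k + 1 < n\<close> by simp
  finally show "(\<Sum>i<n. corner_weight i * lam i ^ k) = 0" .
qed

end

section \<open>The spectrum {0, +-(b-1), +-b, +-(b+1)}\<close>

definition eig :: "real \<Rightarrow> nat \<Rightarrow> real" where
  "eig b j = [0, b - 1, - (b - 1), b, - b, b + 1, - (b + 1)] ! j"

(* (-1)^(eig b j) when b is an even integer *)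
definition eig_parity :: "nat \<Rightarrow> real" where
  "eig_parity j = [1, -1, -1, 1, 1, -1, -1] ! j"

(* proportional to 1 / |prod_{i<>j} (eig b j - eig b i)|, see eig_prod_ret_weight *)
definition ret_weight :: "real \<Rightarrow> nat \<Rightarrow> real" where
  "ret_weight b j = [8 * (4*b^2 - 1), b*(b+1)^2*(2*b+1), b*(b+1)^2*(2*b+1),
     4*(b^2-1)^2, 4*(b^2-1)^2, b*(b-1)^2*(2*b-1), b*(b-1)^2*(2*b-1)] ! j"

definition ret_amp :: "real \<Rightarrow> real \<Rightarrow> real" where
  "ret_amp b t = 8 * (4*b^2 - 1) + 2 * b*(b+1)^2*(2*b+1) * cos ((b-1) * t)
     + 8 * (b^2-1)^2 * cos (b * t) + 2 * b*(b-1)^2*(2*b-1) * cos ((b+1) * t)"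

lemma less_7_cases:
  fixes j :: nat
  assumes "j < 7" obtains "j = 0" | "j = 1" | "j = 2" | "j = 3" | "j = 4" | "j = 5" | "j = 6"
  using assms by linarith

lemma sum_lessThan_7:
  "(\<Sum>j<7. f (j :: nat)) = f 0 + f 1 + f 2 + f 3 + f 4 + f 5 + (f 6 :: 'a :: comm_monoid_add)"
  by (simp add: eval_nat_numeral ac_simps)

lemma eig_inj: "b > 1 \<Longrightarrow> j < 7 \<Longrightarrow> k < 7 \<Longrightarrow> eig b j = eig b k \<Longrightarrow> j = k"
  by (elim less_7_cases) (simp_all add: eig_def)

lemma ret_weight_pos:
  assumes "b > 1" "j < 7" shows "ret_weight b j > 0"
proof -
  have "1 < b^2" using assms(1) by (simp add: less_1_mult power2_eq_square)
  hence "b^2 \<noteq> 1" "1 < 4 * b^2" by linarith+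
  with assms show ?thesis
    by (elim less_7_cases) (simp_all add: ret_weight_def)
qed

lemma abs_eig_parity: "j < 7 \<Longrightarrow> \<bar>eig_parity j\<bar> = 1"
  by (elim less_7_cases) (simp_all add: eig_parity_def)

lemma eig_prod_ret_weight:
  assumes "j < 7"
  shows "eig_parity j * ret_weight b j * (\<Prod>i\<in>{..<7} - {j}. eig b j - eig b i) =
         ret_weight b 0 * (\<Prod>i\<in>{..<7} - {0}. eig b 0 - eig b i)"
  using assms
  by (elim less_7_cases) (simp_all add: eig_def eig_parity_def ret_weight_def
      lessThan_nat_numeral insert_Diff_if field_simps power2_eq_square)

lemma exp_minus_ii_real: "exp (- \<i> * complex_of_real x) = Complex (cos x) (- sin x)"
proof -
  have "exp (- \<i> * complex_of_real x) = cis (- x)" by (simp add: cis_conv_exp)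
  thus ?thesis by (simp add: complex_eq_iff)
qed

lemma exp_pair_sum:
  "complex_of_real c * exp (- \<i> * complex_of_real x) +
   complex_of_real c * exp (- \<i> * complex_of_real (- x)) = complex_of_real (2 * c * cos x)"
  by (simp only: exp_minus_ii_real) (simp add: complex_eq_iff)

lemma ret_weight_exp_sum:
  "(\<Sum>j<7. complex_of_real (ret_weight b j) * exp (- \<i> * complex_of_real (eig b j * t))) =
   complex_of_real (ret_amp b t)"
proof -
  let ?e = "\<lambda>c x. complex_of_real c * exp (- \<i> * complex_of_real x) +
                    complex_of_real c * exp (- \<i> * complex_of_real (- x))"
  have "(\<Sum>j<7. complex_of_real (ret_weight b j) * exp (- \<i> * complex_of_real (eig b j * t))) =
      complex_of_real (8 * (4*b^2 - 1)) + ?e (b*(b+1)^2*(2*b+1)) ((b - 1) * t)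
      + ?e (4*(b^2-1)^2) (b * t) + ?e (b*(b-1)^2*(2*b-1)) ((b + 1) * t)"
    by (simp add: sum_lessThan_7 eig_def ret_weight_def algebra_simps)
  thus ?thesis by (simp only: exp_pair_sum) (simp add: ret_amp_def)
qed

lemma exp_eig_pi:
  assumes "b = real N" "even N" "j < 7"
  shows "exp (- \<i> * complex_of_real (eig b j * pi)) = complex_of_real (eig_parity j)"
proof -
  have "cos (b * pi) = 1" "sin (b * pi) = 0"
    using assms(1,2) by simp_all
  with assms(3) show ?thesis
    by (elim less_7_cases) (simp_all only: exp_minus_ii_real,
        simp_all add: complex_eq_iff eig_def eig_parity_def
        algebra_simps cos_diff sin_diff cos_add sin_add)
qed

section \<open>Counting the zeros of the return amplitude\<close>

fun cheb_poly :: "nat \<Rightarrow> real poly" where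
  "cheb_poly 0 = 1"
| "cheb_poly (Suc 0) = [:0, 1:]"
| "cheb_poly (Suc (Suc n)) = [:0, 2:] * cheb_poly (Suc n) - cheb_poly n"

lemma cheb_poly_cos: "poly (cheb_poly n) (cos x) = cos (real n * x)"
proof (induction n rule: cheb_poly.induct)
  case (3 n)
  have "cos (real n * x) = cos ((real n + 1) * x - x)"
    and "cos ((real n + 2) * x) = cos ((real n + 1) * x + x)"
    by (simp_all add: algebra_simps)
  hence "cos ((real n + 2) * x) = 2 * cos x * cos ((real n + 1) * x) - cos (real n * x)"
    by (simp add: cos_add cos_diff)
  with 3 show ?case by (simp add: algebra_simps)
qed auto

lemma degree_cheb_poly_le: "degree (cheb_poly n) \<le> n"
proof (induction n rule: cheb_poly.induct)
  case (3 n)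
  have "degree ([:0, 2:] * cheb_poly (Suc n)) \<le> Suc (Suc n)"
    using degree_mult_le[of "[:0, 2:]" "cheb_poly (Suc n)"] 3 by simp
  with 3 show ?case by (simp add: degree_diff_le)
qed auto

lemma poly_cheb_poly_minus_1: "poly (cheb_poly n) (-1) = (-1) ^ n"
  using cheb_poly_cos[of n pi] by simp

lemma poly_pderiv_cheb_poly_minus_1: "poly (pderiv (cheb_poly n)) (-1) = (-1) ^ (n+1) * (real n)^2"
proof (induction n rule: cheb_poly.induct)
  case (3 n)
  have pderiv_rec: "pderiv (cheb_poly (Suc (Suc n))) =
      [:2:] * cheb_poly (Suc n) + [:0, 2:] * pderiv (cheb_poly (Suc n)) - pderiv (cheb_poly n)"
    by (simp add: pderiv_mult pderiv_diff pderiv_pCons pderiv_smult algebra_simps)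
  have "poly (pderiv (cheb_poly (Suc (Suc n)))) (-1) =
      2 * (-1)^(n+1) - 2 * ((-1)^(n+2) * (real n + 1)^2) - (-1)^(n+1) * (real n)^2"
    unfolding pderiv_rec using 3 poly_cheb_poly_minus_1[of "Suc n"] by (simp add: algebra_simps)
  also have "\<dots> = (-1)^(n+3) * (real n + 2)^2"
    by (simp add: power_add algebra_simps power2_eq_square)
  finally show ?case by (simp add: power_add algebra_simps)
qed (auto simp: pderiv_pCons)

lemma poly_pderiv2_cheb_poly_minus_1:
  "poly (pderiv (pderiv (cheb_poly n))) (-1) = (-1) ^ n * (real n)^2 * ((real n)^2 - 1) / 3"
proof (induction n rule: cheb_poly.induct)
  case (3 n)
  have pderiv2_rec: "pderiv (pderiv (cheb_poly (Suc (Suc n)))) = [:4:] * pderiv (cheb_poly (Suc n))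
      + [:0, 2:] * pderiv (pderiv (cheb_poly (Suc n))) - pderiv (pderiv (cheb_poly n))"
    by (simp add: pderiv_mult pderiv_diff pderiv_add pderiv_pCons pderiv_smult algebra_simps
        numeral_poly)
  have "poly (pderiv (pderiv (cheb_poly (Suc (Suc n))))) (-1) =
      4 * ((-1)^(n+2) * (real n + 1)^2)
      - 2 * ((-1)^(n+1) * (real n + 1)^2 * ((real n + 1)^2 - 1) / 3)
      - (-1)^n * (real n)^2 * ((real n)^2 - 1) / 3"
    unfolding pderiv2_rec using 3 poly_pderiv_cheb_poly_minus_1[of "Suc n"]
    by (simp only: poly_add poly_diff poly_mult)
      (simp add: power_add field_simps power2_eq_square del: cheb_poly.simps)
  also have "\<dots> = (-1)^(n+2) * (real n + 2)^2 * ((real n + 2)^2 - 1) / 3"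
    by (simp add: power_add field_simps power2_eq_square)
  finally show ?case by (simp add: add.commute)
qed (auto simp: pderiv_pCons)

declare cheb_poly.simps(3)[simp del]

lemma order_ge_if_higher_pderivs_vanish:
  fixes p :: "'a :: {idom, semiring_char_0} poly"
  assumes "p \<noteq> 0" and "\<And>i. i < k \<Longrightarrow> poly ((pderiv ^^ i) p) a = 0"
  shows "k \<le> order a p"
  using assms
proof (induction k arbitrary: p)
  case (Suc k)
  have root: "poly p a = 0" using Suc.prems(2)[of 0] by simp
  have "pderiv p \<noteq> 0"
  proof
    assume "pderiv p = 0"
    then obtain c where "p = [:c:]" using pderiv_iszero by blast
    with root Suc.prems(1) show False by simp
  qed
  moreover have "poly ((pderiv ^^ i) (pderiv p)) a = 0" if "i < k" for i
    using Suc.prems(2)[of "Suc i"] that by (simp add: funpow_Suc_right del: funpow.simps)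
  ultimately have "k \<le> order a (pderiv p)" using Suc.IH by blast
  thus ?case using order_pderiv[OF Suc.prems(1) root] by simp
qed simp

lemma cos_roots_card_le:
  fixes P :: "real poly"
  defines "Z \<equiv> {t. 0 < t \<and> t < pi \<and> poly P (cos t) = 0}"
  assumes "P \<noteq> 0" and "k \<le> order (-1) P"
  shows "finite Z \<and> card Z \<le> degree P - k"
proof -
  have "[:1, 1:] ^ k dvd P" using order_divides[of "-1" k P] assms by simp
  then obtain R where PR: "P = [:1, 1:] ^ k * R" by (rule dvdE)
  have "R \<noteq> 0" using assms(2) PR by auto
  hence deg: "degree R = degree P - k"
    unfolding PR by (subst degree_mult_eq) (auto simp: degree_linear_power)
  have cos_Z: "cos ` Z \<subseteq> {x. poly R x = 0}"
  proof
    fix x assume "x \<in> cos ` Z"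
    then obtain t where t: "0 < t" "t < pi" "poly P (cos t) = 0" "x = cos t"
      unfolding Z_def by auto
    have "cos pi < cos t" using t by (intro cos_monotone_0_pi) auto
    hence "1 + cos t \<noteq> 0" by simp
    thus "x \<in> {x. poly R x = 0}" using t by (simp add: PR poly_power)
  qed
  have inj: "inj_on cos Z"
    by (rule inj_onI) (auto simp: Z_def intro: cos_inj_pi)
  have fin: "finite {x. poly R x = 0}" using poly_roots_finite[OF \<open>R \<noteq> 0\<close>] .
  have "card Z = card (cos ` Z)" using card_image[OF inj] by simp
  also have "\<dots> \<le> card {x. poly R x = 0}" by (rule card_mono[OF fin cos_Z])
  also have "\<dots> \<le> degree R" by (rule card_poly_roots_bound[OF \<open>R \<noteq> 0\<close>])
  finally show ?thesis
    using finite_imageD[OF finite_subset[OF cos_Z fin] inj] deg by simp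
qed

lemma IVT_sign_change:
  fixes f :: "real \<Rightarrow> real"
  assumes "continuous_on {a..c} f" "a \<le> c" "f a * f c < 0"
  shows "\<exists>t. a < t \<and> t < c \<and> f t = 0"
proof -
  have "\<exists>t. a \<le> t \<and> t \<le> c \<and> f t = 0"
  proof (cases "f a < 0")
    case True
    hence "0 < f c" using assms(3) by (auto simp: mult_less_0_iff)
    thus ?thesis using IVT'[of f a 0 c] True assms(1,2) by auto
  next
    case False
    hence "0 < f a" "f c < 0" using assms(3) by (auto simp: mult_less_0_iff)
    thus ?thesis using IVT2'[of f c 0 a] assms(1,2) by auto
  qed
  then obtain t where t: "a \<le> t" "t \<le> c" "f t = 0" by blast
  moreover have "t \<noteq> a" "t \<noteq> c" using t(3) assms(3) by auto
  ultimately show ?thesis by (intro exI[of _ t]) auto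
qed

lemma card_zeros_ge_sign_changes:
  fixes f :: "real \<Rightarrow> real" and x :: "nat \<Rightarrow> real"
  assumes "continuous_on UNIV f" "mono x"
    and sign_change: "\<And>j. j < N \<Longrightarrow> f (x j) * f (x (Suc j)) < 0"
    and "finite Z" and zeros: "\<And>t. x 0 < t \<Longrightarrow> t < x N \<Longrightarrow> f t = 0 \<Longrightarrow> t \<in> Z"
  shows "N \<le> card Z"
proof -
  have "\<exists>t. x j < t \<and> t < x (Suc j) \<and> f t = 0" if "j < N" for j
    using continuous_on_subset[OF assms(1)] monoD[OF assms(2), of j "Suc j"] sign_change[OF that]
    by (intro IVT_sign_change) auto
  then obtain r where r: "\<And>j. j < N \<Longrightarrow> x j < r j \<and> r j < x (Suc j) \<and> f (r j) = 0"
    by metis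
  have inj: "inj_on r {..<N}"
  proof (rule linorder_inj_onI)
    fix i j assume "i < j" "j \<in> {..<N}"
    hence "r i < x (Suc i)" "x (Suc i) \<le> x j" "x j < r j"
      using r[of i] r[of j] monoD[OF assms(2), of "Suc i" j] by auto
    thus "r i \<noteq> r j" by simp
  qed auto
  have sub: "r ` {..<N} \<subseteq> Z"
  proof
    fix t assume "t \<in> r ` {..<N}"
    then obtain j where j: "j < N" "t = r j" by auto
    have "x 0 \<le> x j" "x (Suc j) \<le> x N" using j monoD[OF assms(2)] by auto
    thus "t \<in> Z" using r[OF j(1)] j(2) by (intro zeros) auto
  qed
  have "N = card (r ` {..<N})" using card_image[OF inj] by simp
  also have "\<dots> \<le> card Z" by (rule card_mono[OF \<open>finite Z\<close> sub])
  finally show ?thesis .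
qed

definition ret_poly :: "nat \<Rightarrow> real poly" where
  "ret_poly m = (let b = real (2*m+2) in
     [:8 * (4*b^2 - 1):] + Polynomial.smult (2 * b*(b+1)^2*(2*b+1)) (cheb_poly (2*m+1))
     + Polynomial.smult (8 * (b^2-1)^2) (cheb_poly (2*m+2))
     + Polynomial.smult (2 * b*(b-1)^2*(2*b-1)) (cheb_poly (2*m+3)))"

lemma poly_ret_poly_cos: "poly (ret_poly m) (cos t) = ret_amp (real (2*m+2)) t"
proof -
  have "real (2*m+2) - 1 = real (2*m+1)" "real (2*m+2) + 1 = real (2*m+3)" by simp_all
  thus ?thesis
    unfolding ret_poly_def Let_def ret_amp_def
    by (simp only: poly_add poly_smult poly_pCons poly_0 cheb_poly_cos)
qed

lemma degree_ret_poly_le: "degree (ret_poly m) \<le> 2*m+3"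
  unfolding ret_poly_def Let_def
  using degree_cheb_poly_le[of "2*m+1"] degree_cheb_poly_le[of "2*m+2"] degree_cheb_poly_le[of "2*m+3"]
  by (intro degree_add_le) (auto intro: order.trans[OF degree_smult_le])

lemma ret_amp_0: "ret_amp b 0 = 16 * (b^4 + 2*b^2)"
  by (simp add: ret_amp_def field_simps power2_eq_square power4_eq_xxxx)

lemma ret_poly_nonzero: "ret_poly m \<noteq> 0"
proof
  assume "ret_poly m = 0"
  hence "ret_amp (real (2*m+2)) 0 = 0" using poly_ret_poly_cos[of m 0] by simp
  moreover have "ret_amp (real (2*m+2)) 0 > 0"
    unfolding ret_amp_0 by (intro mult_pos_pos add_pos_pos) auto
  ultimately show False by simp
qed

lemma ret_poly_triple_root: "3 \<le> order (-1) (ret_poly m)"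
proof (rule order_ge_if_higher_pderivs_vanish[OF ret_poly_nonzero])
  define b where "b = real (2*m+2)"
  have "(-1::real) ^ (2*m+1) = -1" "(-1::real) ^ (2*m+2) = 1" "(-1::real) ^ (2*m+3) = -1"
    "(-1::real) ^ (2*m+1+1) = 1" "(-1::real) ^ (2*m+2+1) = -1" "(-1::real) ^ (2*m+3+1) = 1"
    by (simp_all add: power_add power_mult)
  moreover have "real (2*m+1) = b - 1" "real (2*m+3) = b + 1" by (simp_all add: b_def)
  ultimately have T: "poly (cheb_poly (2*m+1)) (-1) = -1" "poly (cheb_poly (2*m+2)) (-1) = 1"
      "poly (cheb_poly (2*m+3)) (-1) = -1"
    and T': "poly (pderiv (cheb_poly (2*m+1))) (-1) = (b - 1)^2"
      "poly (pderiv (cheb_poly (2*m+2))) (-1) = - (b^2)"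
      "poly (pderiv (cheb_poly (2*m+3))) (-1) = (b + 1)^2"
    and T'': "poly (pderiv (pderiv (cheb_poly (2*m+1)))) (-1) = - ((b - 1)^2 * ((b - 1)^2 - 1) / 3)"
      "poly (pderiv (pderiv (cheb_poly (2*m+2)))) (-1) = b^2 * (b^2 - 1) / 3"
      "poly (pderiv (pderiv (cheb_poly (2*m+3)))) (-1) = - ((b + 1)^2 * ((b + 1)^2 - 1) / 3)"
    by (simp_all only: poly_cheb_poly_minus_1 poly_pderiv_cheb_poly_minus_1
        poly_pderiv2_cheb_poly_minus_1) (simp_all add: b_def)
  have pderivs: "(pderiv ^^ 0) p = p" "(pderiv ^^ 1) p = pderiv p" "(pderiv ^^ 2) p = pderiv (pderiv p)"
    for p :: "real poly" by (simp_all add: numeral_2_eq_2)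
  fix i :: nat assume "i < 3"
  hence "i = 0 \<or> i = 1 \<or> i = 2" by auto
  thus "poly ((pderiv ^^ i) (ret_poly m)) (-1) = 0"
    unfolding ret_poly_def Let_def b_def[symmetric]
    by (elim disjE) (simp_all only: pderivs pderiv_add pderiv_smult pderiv_pCons pderiv_0 poly_add poly_smult poly_pCons poly_0 T T' T'',
        simp_all add: field_simps power2_eq_square)
qed

lemma ret_amp_zeros_card_le:
  "finite {t. 0 < t \<and> t < pi \<and> ret_amp (real (2*m+2)) t = 0} \<and>
   card {t. 0 < t \<and> t < pi \<and> ret_amp (real (2*m+2)) t = 0} \<le> 2*m"
  using cos_roots_card_le[OF ret_poly_nonzero[of m] ret_poly_triple_root[of m]] degree_ret_poly_le[of m]
  unfolding poly_ret_poly_cos by linarith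

lemma cos_le_taylor_4:
  fixes x :: real assumes "x > 0" shows "cos x \<le> 1 - x^2/2 + x^4/24"
proof -
  obtain t where t: "cos x = (\<Sum>m<4. cos_coeff m * x ^ m) + (cos (t + 1/2 * real 4 * pi) / fact 4) * x ^ 4"
    using Maclaurin_cos_expansion2[OF assms, of 4] by auto
  have "cos_coeff 0 = 1" "cos_coeff 1 = 0" "cos_coeff 2 = -1/2" "cos_coeff 3 = 0"
    by (simp_all add: cos_coeff_def)
  hence "(\<Sum>m<4. cos_coeff m * x ^ m) = 1 - x^2/2"
    by (simp add: eval_nat_numeral)
  moreover have "(cos (t + 1/2 * real 4 * pi) / fact 4) * x ^ 4 \<le> (1 / fact 4) * x^4"
    by (intro mult_right_mono divide_right_mono) auto
  ultimately show ?thesis using t by (simp add: eval_nat_numeral)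
qed

lemma one_minus_cos_gt:
  fixes x :: real assumes "0 < x" "x < 3" shows "x^2 / 8 < 1 - cos x"
proof -
  have "x * x < 3 * 3" using mult_strict_mono[of x 3 x 3] assms by simp
  hence "x^4 < 9 * x^2" using assms(1) by (simp add: power4_eq_xxxx power2_eq_square)
  thus ?thesis using cos_le_taylor_4[OF assms(1)] by simp
qed

lemma pi_ge_3: "3 \<le> pi"
  using sin_x_le_x[of "pi/6"] sin_30 by simp

lemma ret_amp_grid:
  assumes "b \<noteq> 0"
  shows "ret_amp b (real j * pi / b) =
    8 * (4*b^2 - 1) + (-1)^j * (8 * (b^2-1)^2 + 8 * (b^4 + 2*b^2) * cos (real j * pi / b))"
proof -
  define \<theta> where "\<theta> = real j * pi / b"
  have "b * \<theta> = real j * pi" "(b - 1) * \<theta> = real j * pi - \<theta>" "(b + 1) * \<theta> = real j * pi + \<theta>"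
    using assms by (simp_all add: \<theta>_def field_simps)
  hence "ret_amp b \<theta> = 8 * (4*b^2 - 1) + (-1)^j * (8 * (b^2-1)^2
      + (2 * b*(b+1)^2*(2*b+1) + 2 * b*(b-1)^2*(2*b-1)) * cos \<theta>)"
    by (simp add: ret_amp_def cos_diff cos_add algebra_simps)
  also have "2 * b*(b+1)^2*(2*b+1) + 2 * b*(b-1)^2*(2*b-1) = 8 * (b^4 + 2*b^2)"
    by (simp add: algebra_simps power2_eq_square power4_eq_xxxx)
  finally show ?thesis by (simp add: \<theta>_def)
qed

lemma ret_amp_grid_even:
  assumes "b > 0" "even j" "real j < b"
  shows "ret_amp b (real j * pi / b) > 0"
proof -
  have "real j * pi / b < pi" using assms(1,3) by (simp add: field_simps)
  hence "cos pi < cos (real j * pi / b)" using assms(1) by (intro cos_monotone_0_pi) auto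
  hence "0 < 1 + cos (real j * pi / b)" by simp
  moreover have "0 < 8 * (b^4 + 2*b^2)" using assms(1) by (simp add: add_pos_pos)
  ultimately have "0 < 8 * (b^4 + 2*b^2) * (1 + cos (real j * pi / b))" by simp
  also have "\<dots> = ret_amp b (real j * pi / b)"
    unfolding ret_amp_grid[of b j, OF order.strict_implies_not_eq[OF assms(1), symmetric]]
    using assms(2) by (simp add: algebra_simps power2_eq_square power4_eq_xxxx)
  finally show ?thesis .
qed

lemma ret_amp_grid_odd:
  assumes "b \<ge> 4" "odd j" "real j \<le> b - 3"
  shows "ret_amp b (real j * pi / b) < 0"
proof -
  define x where "x = 3 * pi / b"
  have "0 < x" "x < 3" "9 \<le> x * b"
    using assms(1) pi_less_4 pi_ge_3 by (simp_all add: x_def field_simps)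
  have "real j * pi \<le> (b - 3) * pi" using assms(3) by (intro mult_right_mono) auto
  hence "real j * pi / b \<le> pi - x" using assms(1) by (simp add: x_def field_simps)
  moreover have "x \<le> pi" using \<open>x < 3\<close> pi_ge_3 by simp
  ultimately have "cos (pi - x) \<le> cos (real j * pi / b)"
    using assms(1) \<open>0 < x\<close> by (intro cos_monotone_0_pi_le) auto
  hence "- (8 * (b^4 + 2*b^2) * cos x) \<le> 8 * (b^4 + 2*b^2) * cos (real j * pi / b)"
    using mult_left_mono[of "- cos x" "cos (real j * pi / b)" "8 * (b^4 + 2*b^2)"] by simp
  moreover have "ret_amp b (real j * pi / b) =
      8 * (4*b^2 - 1) - 8 * (b^2-1)^2 - 8 * (b^4 + 2*b^2) * cos (real j * pi / b)"
    using assms(1,2) ret_amp_grid[of b j] by simp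
  ultimately have "ret_amp b (real j * pi / b) \<le> 8 * (4*b^2 - 1) - 8 * (b^2-1)^2 + 8 * (b^4 + 2*b^2) * cos x"
    by linarith
  also have "\<dots> = 8 * ((8*b^2 - 2) - (b^4 + 2*b^2) * (1 - cos x))"
    by (simp add: algebra_simps power2_eq_square power4_eq_xxxx)
  also have "\<dots> < 0"
  proof -
    have "(x * b)^2 \<ge> 9^2" using \<open>9 \<le> x * b\<close> by (intro power_mono) auto
    have "8*b^2 - 2 < (b^2 + 2) * 81 / 8" by (simp add: field_simps add_pos_nonneg)
    also have "\<dots> \<le> (b^2 + 2) * (x * b)^2 / 8"
      using \<open>(x * b)^2 \<ge> 9^2\<close> by (intro divide_right_mono mult_left_mono) auto
    also have "\<dots> = (b^4 + 2*b^2) * (x^2 / 8)"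
      by (simp add: field_simps power2_eq_square power4_eq_xxxx)
    also have "\<dots> < (b^4 + 2*b^2) * (1 - cos x)"
      using one_minus_cos_gt[OF \<open>0 < x\<close> \<open>x < 3\<close>] assms(1)
      by (intro mult_strict_left_mono) (auto intro: add_pos_pos)
    finally show ?thesis by simp
  qed
  finally show ?thesis .
qed

lemma ret_amp_zeros_card_ge:
  assumes "m \<ge> 1" "finite Z"
    and zeros: "\<And>t. 0 < t \<Longrightarrow> t < pi \<Longrightarrow> ret_amp (real (2*m+2)) t = 0 \<Longrightarrow> t \<in> Z"
  shows "2*m \<le> card Z"
proof -
  define b where "b = real (2*m+2)"
  define x where "x j = real j * pi / b" for j
  have "4 \<le> b" using assms(1) by (simp add: b_def)
  have even_pos: "ret_amp b (x i) > 0" if "even i" "i \<le> 2*m" for i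
    using that ret_amp_grid_even[of b i] by (simp add: x_def b_def)
  have odd_neg: "ret_amp b (x i) < 0" if "odd i" "i < 2*m" for i
    using that \<open>4 \<le> b\<close> ret_amp_grid_odd[of b i] by (simp add: x_def b_def)
  have sign_change: "ret_amp b (x j) * ret_amp b (x (Suc j)) < 0" if "j < 2*m" for j
  proof (cases "even j")
    case True
    hence "Suc j < 2*m" using that by presburger
    thus ?thesis using True even_pos[of j] odd_neg[of "Suc j"] that by (simp add: mult_pos_neg)
  next
    case False
    thus ?thesis using odd_neg[of j] even_pos[of "Suc j"] that by (simp add: mult_neg_pos)
  qed
  have "continuous_on UNIV (ret_amp b)"
    unfolding ret_amp_def by (intro continuous_intros)
  moreover have "mono x"
    unfolding x_def using \<open>4 \<le> b\<close> by (intro monoI divide_right_mono mult_right_mono) auto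
  moreover have "x (2*m) \<le> pi" by (simp add: x_def b_def field_simps)
  hence "t \<in> Z" if "x 0 < t" "t < x (2*m)" "ret_amp b t = 0" for t
    using zeros[of t] that by (simp add: x_def b_def)
  ultimately show ?thesis
    using card_zeros_ge_sign_changes[of "ret_amp b" x "2*m" Z] sign_change \<open>finite Z\<close> by blast
qed

theorem ret_amp_zeros_card:
  assumes "m \<ge> 1"
  shows "card {t. 0 < t \<and> t < pi \<and> ret_amp (real (2*m+2)) t = 0} = 2*m"
proof -
  let ?Z = "{t. 0 < t \<and> t < pi \<and> ret_amp (real (2*m+2)) t = 0}"
  have "finite ?Z" "card ?Z \<le> 2*m" using ret_amp_zeros_card_le[of m] by auto
  moreover have "2*m \<le> card ?Z" using ret_amp_zeros_card_ge[OF assms \<open>finite ?Z\<close>] by blast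
  ultimately show ?thesis by linarith
qed

section \<open>Perfect state transfer\<close>

locale pst_jacobi7 = symmetric_eigenbasis 7 J "eig b" v for J b v +
  fixes k :: nat
  assumes jacobi: "jacobi_matrix 7 J"
    and pst: "realizes_pst 7 J"
    and b_eq: "b = real (2 * k)"
    and k_pos: "k \<ge> 1"
begin

lemma b_gt_1: "b > 1"
  using b_eq k_pos by simp

lemma eig_prod_nonzero: "j < 7 \<Longrightarrow> (\<Prod>i\<in>{..<7} - {j}. eig b j - eig b i) \<noteq> 0"
  using eigenvalues_distinct by auto

lemma corner_weight_eq:
  assumes "j < 7"
  shows "corner_weight j = corner_weight 0 * eig_parity j * ret_weight b j / ret_weight b 0"
proof -
  have "corner_weight j * (\<Prod>i\<in>{..<7} - {j}. eig b j - eig b i) =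
      corner_weight 0 * eig_parity j * ret_weight b j / ret_weight b 0 *
      (\<Prod>i\<in>{..<7} - {j}. eig b j - eig b i)"
    using corner_weight_prod_eq[OF jacobi assms] eig_prod_ret_weight[OF assms, of b]
      ret_weight_pos[OF b_gt_1, of 0]
    by (simp add: field_simps)
  thus ?thesis using mult_right_cancel[OF eig_prod_nonzero[OF assms]] by blast
qed

lemma end_entries_abs_eq:
  assumes "j < 7" shows "\<bar>v j $ 0\<bar> = \<bar>v j $ 6\<bar>"
proof -
  obtain T where "pst_at 7 J T" using pst unfolding realizes_pst_def by blast
  then obtain \<phi> where "complex_of_real (v j $ 0) * exp (- \<i> * complex_of_real (eig b j * T)) =
      exp (\<i> * complex_of_real \<phi>) * complex_of_real (v j $ 6)"
    using assms unfolding pst_at_iff_phases[OF zero_less_numeral] by auto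
  hence "norm (complex_of_real (v j $ 0) * exp (- \<i> * complex_of_real (eig b j * T))) =
      norm (exp (\<i> * complex_of_real \<phi>) * complex_of_real (v j $ 6))" by simp
  thus ?thesis by (simp add: norm_mult exp_minus_ii_real)
qed

lemma return_weight_eq:
  assumes "j < 7"
  shows "v j $ 0 * v j $ 0 / (v j \<bullet> v j) = \<bar>corner_weight 0\<bar> * ret_weight b j / ret_weight b 0"
proof -
  have "v j $ 0 * v j $ 0 = \<bar>v j $ 6 * v j $ 0\<bar>"
    using end_entries_abs_eq[OF assms] by (metis abs_mult abs_mult_self_eq)
  hence "v j $ 0 * v j $ 0 / (v j \<bullet> v j) = \<bar>corner_weight j\<bar>"
    using eigenvector_sqnorm_pos[of j] assms by (simp add: corner_weight_def)
  also have "\<dots> = \<bar>corner_weight 0\<bar> * ret_weight b j / ret_weight b 0"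
    using corner_weight_eq[OF assms] abs_eig_parity[OF assms]
      ret_weight_pos[OF b_gt_1 assms] ret_weight_pos[OF b_gt_1, of 0]
    by (simp add: abs_mult)
  finally show ?thesis .
qed

lemma corner_weight_0_nonzero: "corner_weight 0 \<noteq> 0"
proof
  assume "corner_weight 0 = 0"
  hence "(\<Sum>j<7. v j $ 0 * v j $ 0 / (v j \<bullet> v j)) = 0"
    by (simp add: return_weight_eq)
  thus False using eigenbasis_complete[of 0 0] by simp
qed

lemma first_entry_nonzero:
  assumes "j < 7" shows "v j $ 0 \<noteq> 0"
  using return_weight_eq[OF assms] corner_weight_0_nonzero ret_weight_pos[OF b_gt_1] assms
  by fastforce

lemma mirror_relation:
  assumes "j < 7" shows "v j $ 6 = sgn (corner_weight 0) * eig_parity j * v j $ 0"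
proof -
  have "v j $ 6 * v j $ 0 / (v j \<bullet> v j) = corner_weight j"
    by (simp add: corner_weight_def)
  also have "\<dots> = sgn (corner_weight 0) * \<bar>corner_weight 0\<bar> * eig_parity j * ret_weight b j / ret_weight b 0"
    using corner_weight_eq[OF assms] by (simp add: sgn_mult_abs)
  also have "\<dots> = sgn (corner_weight 0) * eig_parity j * (v j $ 0 * v j $ 0 / (v j \<bullet> v j))"
    by (simp add: return_weight_eq[OF assms])
  finally show ?thesis
    using eigenvector_sqnorm_pos[OF assms] first_entry_nonzero[OF assms] by (simp add: field_simps)
qed

lemma pst_at_pi: "pst_at 7 J pi"
proof -
  define s where "s = sgn (corner_weight 0)"
  have "s * s = 1" using corner_weight_0_nonzero by (simp add: s_def sgn_if)
  have "complex_of_real (v j $ 0) * exp (- \<i> * complex_of_real (eig b j * pi)) =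
      complex_of_real s * complex_of_real (v j $ 6)" if "j < 7" for j
  proof -
    have "v j $ 0 * eig_parity j = s * v j $ 6"
      using mirror_relation[OF that] \<open>s * s = 1\<close> by (simp add: s_def mult_ac)
    thus ?thesis
      using exp_eig_pi[OF b_eq _ that] by (simp flip: of_real_mult)
  qed
  moreover have "complex_of_real s = exp (\<i> * complex_of_real (if s = 1 then 0 else pi))"
    using corner_weight_0_nonzero by (auto simp: s_def sgn_if)
  ultimately show ?thesis
    unfolding pst_at_iff_phases[OF zero_less_numeral]
    by (intro conjI exI[of _ "if s = 1 then 0 else pi"]) auto
qed

lemma not_pst_before_pi:
  assumes "0 < t" "t < pi" shows "\<not> pst_at 7 J t"
proof
  assume "pst_at 7 J t"
  then obtain \<phi> where phases: "\<And>j. j < 7 \<Longrightarrow>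
      complex_of_real (v j $ 0) * exp (- \<i> * complex_of_real (eig b j * t)) =
      exp (\<i> * complex_of_real \<phi>) * complex_of_real (v j $ 6)"
    unfolding pst_at_iff_phases[OF zero_less_numeral] by auto
  define c where "c = exp (\<i> * complex_of_real \<phi>) * complex_of_real (sgn (corner_weight 0))"
  have phase: "exp (- \<i> * complex_of_real (eig b j * t)) = c * complex_of_real (eig_parity j)"
    if "j < 7" for j
  proof -
    have "complex_of_real (v j $ 0) * exp (- \<i> * complex_of_real (eig b j * t)) =
        complex_of_real (v j $ 0) * (c * complex_of_real (eig_parity j))"
      using phases[OF that] unfolding mirror_relation[OF that] by (simp add: c_def mult_ac)
    thus ?thesis using first_entry_nonzero[OF that] by simp
  qed
  \<comment> \<open>so every phase is (-1)^(eig b j), and the consecutive eigenvalues b - 1, b force exp(-it) = -1\<close>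
  have "c = 1" using phase[of 0] by (simp add: eig_def eig_parity_def)
  hence "exp (- \<i> * complex_of_real ((b - 1) * t)) = -1" "exp (- \<i> * complex_of_real (b * t)) = 1"
    using phase[of 1] phase[of 3] by (simp_all add: eig_def eig_parity_def)
  moreover have "exp (- \<i> * complex_of_real (b * t)) =
      exp (- \<i> * complex_of_real ((b - 1) * t)) * exp (- \<i> * complex_of_real t)"
    by (simp add: exp_add[symmetric] algebra_simps)
  ultimately have "- exp (- \<i> * complex_of_real t) = 1" by simp
  hence "exp (- \<i> * complex_of_real t) = -1" by (metis minus_minus)
  hence "cos t = -1" by (simp only: exp_minus_ii_real) (simp add: complex_eq_iff)
  moreover have "cos pi < cos t" using assms by (intro cos_monotone_0_pi) auto
  ultimately show False by simp
qed

lemma earliest_pst_time_iff: "earliest_pst_time 7 J T \<longleftrightarrow> T = pi"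
  using pst_at_pi not_pst_before_pi unfolding earliest_pst_time_def
  by (metis linorder_neqE_linordered_idom pst_at_def)

lemma evol_0_eq: "evol J t 0 = complex_of_real (\<bar>corner_weight 0\<bar> / ret_weight b 0 * ret_amp b t)"
proof -
  have "evol J t 0 = (\<Sum>j<7. complex_of_real (\<bar>corner_weight 0\<bar> / ret_weight b 0) *
      (complex_of_real (ret_weight b j) * exp (- \<i> * complex_of_real (eig b j * t))))"
    by (simp add: evol_spectral return_weight_eq mult_ac)
  also have "\<dots> = complex_of_real (\<bar>corner_weight 0\<bar> / ret_weight b 0) * complex_of_real (ret_amp b t)"
    by (simp only: ret_weight_exp_sum flip: sum_distrib_left)
  finally show ?thesis by simp
qed

lemma ese_times_eq: "ese_times 7 J T = {\<tau>. 0 < \<tau> \<and> \<tau> < T \<and> ret_amp b \<tau> = 0}"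
  using corner_weight_0_nonzero ret_weight_pos[OF b_gt_1, of 0]
  by (simp add: ese_times_def evol_0_eq)

end

theorem theorem3p4:
  fixes m :: nat and J :: "real mat"
  assumes "m \<ge> 1"
    and "jacobi_matrix 7 J"
    and "realizes_pst 7 J"
    and "spectrum J = {0, real (2*m+1), - real (2*m+1), real (2*m+2), - real (2*m+2),
                       real (2*m+3), - real (2*m+3)}"
  shows "(\<exists>T. earliest_pst_time 7 J T) \<and>
         (\<forall>T. earliest_pst_time 7 J T \<longrightarrow> card (ese_times 7 J T) = 2 * m)"
proof -
  define b where "b = real (2*m+2)"
  have "eig b j \<in> spectrum J" if "j < 7" for j
    using that unfolding assms(4) by (elim less_7_cases) (auto simp: b_def eig_def)
  hence "eigenvalue J (eig b j)" if "j < 7" for j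
    using that by (simp add: spectrum_def)
  then obtain v where "\<And>j. j < 7 \<Longrightarrow> eigenvector J (v j) (eig b j)"
    unfolding eigenvalue_def by metis
  then interpret pst_jacobi7 J b v "m+1"
    using assms(2,3) eig_inj[of b] by unfold_locales (auto simp: b_def jacobi_matrix_def)
  show ?thesis
    using earliest_pst_time_iff ese_times_eq ret_amp_zeros_card[OF assms(1)] by (auto simp: b_def)
qed

end
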